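(* Let $n$ be a natural number which is not a perfect square and such that $v_2(n)\ge0$ is even (in particular $n$ may be odd). Then $D_{S(n)^*}=C_{S(n)^*}=3$.
   Context: For a natural number $n$, $\mathbb Z_n=\mathbb Z/n\mathbb Z$, $S(n)=\{x^2:x\in\mathbb Z_n\}$, $S(n)^*=S(n)\setminus\{0\}$. For $A\subseteq\mathbb Z_n$, a sequence $(y_1,\dots,y_t)$ ($t\ge1$) in $\mathbb Z_n$ is an $A$-weighted zero-sum sequence if there exist $a_1,\dots,a_t\in A$ with $\sum a_iy_i=0$; a sequence has an $A$-weighted zero-sum subsequence if some nonempty subsequence is an $A$-weighted zero-sum sequence. $D_A(n)$ is the least positive integer $t$ such that every sequence of length $t$ in $\mathbb Z_n$ has an $A$-weighted zero-sum subsequence; $C_A(n)$ is the least positive integer $t$ such that every sequence of length $t$ in $\mathbb Z_n$ has an $A$-weighted zero-sum subsequence consisting of consecutive terms. $D_{S(n)^*}=D_{S(n)^*}(n)$, $C_{S(n)^*}=C_{S(n)^*}(n)$. $v_2(n)$ is the exponent of $2$ in $n$. *)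

theory Defs
  imports Main "HOL-Library.Sublist" "HOL-Computational_Algebra.Primes"
begin

text \<open>Elements of Z_n are represented by integers in {0..<n}; equality in Z_n is congruence mod n.\<close>

definition sq_set :: "nat \<Rightarrow> int set" where
  "sq_set n = {(x ^ 2) mod int n | x. x \<in> {0..<int n}}"

definition sq_set_star :: "nat \<Rightarrow> int set" where
  "sq_set_star n = sq_set n - {0}"

definition weighted_zero_sum :: "nat \<Rightarrow> int set \<Rightarrow> int list \<Rightarrow> bool" where
  "weighted_zero_sum n A ys \<longleftrightarrow> ys \<noteq> [] \<and>
     (\<exists>as. length as = length ys \<and> set as \<subseteq> A \<and>
        (\<Sum>i<length ys. as ! i * ys ! i) mod int n = 0)"

definition has_wzs_subseq :: "nat \<Rightarrow> int set \<Rightarrow> int list \<Rightarrow> bool" where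
  "has_wzs_subseq n A ys \<longleftrightarrow> (\<exists>zs. subseq zs ys \<and> zs \<noteq> [] \<and> weighted_zero_sum n A zs)"

definition has_wzs_consec :: "nat \<Rightarrow> int set \<Rightarrow> int list \<Rightarrow> bool" where
  "has_wzs_consec n A ys \<longleftrightarrow> (\<exists>zs. sublist zs ys \<and> zs \<noteq> [] \<and> weighted_zero_sum n A zs)"

definition D_const :: "int set \<Rightarrow> nat \<Rightarrow> nat" where
  "D_const A n = (LEAST t. t > 0 \<and> (\<forall>ys. length ys = t \<and> set ys \<subseteq> {0..<int n} \<longrightarrow> has_wzs_subseq n A ys))"

definition C_const :: "int set \<Rightarrow> nat \<Rightarrow> nat" where
  "C_const A n = (LEAST t. t > 0 \<and> (\<forall>ys. length ys = t \<and> set ys \<subseteq> {0..<int n} \<longrightarrow> has_wzs_consec n A ys))"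

end

theory Submission
  imports Defs "HOL-Number_Theory.Number_Theory" "HOL-Computational_Algebra.Nth_Powers"
begin

text \<open>
  Upper bound: some odd prime \<open>p\<close> divides \<open>n\<close> to an odd power, \<open>n = p^(2k+1) r\<close> with
  \<open>p \<nmid> r\<close>. For any \<open>y\<^sub>1, y\<^sub>2, y\<^sub>3\<close> a block of consecutive terms is a zero sum modulo \<open>p\<close>
  with weights that are squares of units: a single term divisible by \<open>p\<close>, a pair
  \<open>(y\<^sub>i, y\<^sub>i\<^sub>+\<^sub>1)\<close> when \<open>-y\<^sub>i y\<^sub>i\<^sub>+\<^sub>1\<close> is a square, and otherwise all three terms, since
  then \<open>y\<^sub>1 y\<^sub>3\<close> is a square and an explicit solution exists. Multiplying the weights by
  \<open>(r p^k)^2\<close> turns this into a zero sum modulo \<open>n\<close> with weights in \<open>S(n)\<^sup>*\<close>.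

  Lower bound: by the Chinese remainder theorem choose \<open>c\<close> that is a non-square modulo every
  odd prime divisor of \<open>n\<close>, with \<open>c \<equiv> 3 (mod 4)\<close> if \<open>n\<close> is even. Since \<open>v\<^sub>2(n)\<close> is even,
  comparing valuations shows that \<open>x^2 \<equiv> c z^2 (mod n)\<close> forces \<open>n | z^2\<close>; hence the
  sequence \<open>(1, -c)\<close> has no \<open>S(n)\<^sup>*\<close>-weighted zero-sum subsequence.
\<close>

lemma has_wzs_consecI:
  assumes "sublist zs ys" "weighted_zero_sum n A zs"
  shows "has_wzs_consec n A ys"
  using assms unfolding has_wzs_consec_def weighted_zero_sum_def by (intro exI[of _ zs]) simp

lemma subseq_singleton_iff: "subseq zs [b] \<longleftrightarrow> zs \<in> {[], [b]}"
  by (cases zs) auto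

lemma subseq_two_iff: "subseq zs [a, b] \<longleftrightarrow> zs \<in> {[], [a], [b], [a, b]}"
  by (cases zs) (auto simp: subseq_singleton_iff)

lemma weighted_zero_sum_iff:
  "weighted_zero_sum n A ys \<longleftrightarrow> ys \<noteq> [] \<and>
     (\<exists>as. length as = length ys \<and> set as \<subseteq> A \<and> int n dvd sum_list (map2 (*) as ys))"
  unfolding weighted_zero_sum_def
  by (auto simp: sum_list_sum_nth atLeast0LessThan dvd_eq_mod_eq_0 cong: conj_cong)

lemma weighted_zero_sum_singleton_iff:
  "weighted_zero_sum n A [a] \<longleftrightarrow> (\<exists>w\<in>A. int n dvd w * a)"
proof
  assume "weighted_zero_sum n A [a]"
  then obtain as where "length as = Suc 0" "set as \<subseteq> A" "int n dvd sum_list (map2 (*) as [a])"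
    unfolding weighted_zero_sum_iff by auto
  moreover from this(1) obtain w where "as = [w]"
    by (metis length_0_conv length_Suc_conv)
  ultimately show "\<exists>w\<in>A. int n dvd w * a"
    by auto
next
  assume "\<exists>w\<in>A. int n dvd w * a"
  then obtain w where "w \<in> A" "int n dvd w * a" ..
  then show "weighted_zero_sum n A [a]"
    unfolding weighted_zero_sum_iff by (intro conjI exI[of _ "[w]"]) simp_all
qed

lemma weighted_zero_sum_pair_iff:
  "weighted_zero_sum n A [a, b] \<longleftrightarrow> (\<exists>v\<in>A. \<exists>w\<in>A. int n dvd v * a + w * b)"
proof
  assume "weighted_zero_sum n A [a, b]"
  then obtain as where "length as = Suc (Suc 0)" "set as \<subseteq> A"
    "int n dvd sum_list (map2 (*) as [a, b])"
    unfolding weighted_zero_sum_iff by auto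
  moreover from this(1) obtain v w where "as = [v, w]"
    by (metis length_0_conv length_Suc_conv)
  ultimately show "\<exists>v\<in>A. \<exists>w\<in>A. int n dvd v * a + w * b"
    by auto
next
  assume "\<exists>v\<in>A. \<exists>w\<in>A. int n dvd v * a + w * b"
  then obtain v w where "v \<in> A" "w \<in> A" "int n dvd v * a + w * b" by blast
  then show "weighted_zero_sum n A [a, b]"
    unfolding weighted_zero_sum_iff by (intro conjI exI[of _ "[v, w]"]) simp_all
qed

lemma weighted_zero_sum_tripleI:
  "u \<in> A \<Longrightarrow> v \<in> A \<Longrightarrow> w \<in> A \<Longrightarrow> int n dvd u * a + v * b + w * c \<Longrightarrow>
    weighted_zero_sum n A [a, b, c]"
  unfolding weighted_zero_sum_iff by (intro conjI exI[of _ "[u, v, w]"]) (simp_all add: add.assoc)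

lemma has_wzs_subseq_mono:
  "subseq xs ys \<Longrightarrow> has_wzs_subseq n A xs \<Longrightarrow> has_wzs_subseq n A ys"
  unfolding has_wzs_subseq_def by (meson subseq_order.trans)

lemma has_wzs_consec_imp_subseq: "has_wzs_consec n A ys \<Longrightarrow> has_wzs_subseq n A ys"
  unfolding has_wzs_consec_def has_wzs_subseq_def by (auto intro: sublist_imp_subseq)

section \<open>Quadratic residues modulo an odd prime\<close>

lemma Legendre_mult:
  assumes "prime p" "2 < p"
  shows "Legendre (a * b) (int p) = Legendre a (int p) * Legendre b (int p)"
proof -
  let ?d = "Legendre (a * b) (int p) - Legendre a (int p) * Legendre b (int p)"
  have "[Legendre (a * b) (int p) = a ^ ((p - 1) div 2) * b ^ ((p - 1) div 2)] (mod int p)"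
    using euler_criterion[OF assms, of "a * b"] by (simp add: power_mult_distrib)
  also have "[a ^ ((p - 1) div 2) * b ^ ((p - 1) div 2) = Legendre a (int p) * Legendre b (int p)] (mod int p)"
    using euler_criterion[OF assms, of a] euler_criterion[OF assms, of b]
    by (intro cong_mult) (auto simp: cong_sym)
  finally have "int p dvd ?d"
    by (simp add: cong_iff_dvd_diff)
  moreover have "\<bar>?d\<bar> < int p"
    using assms(2) by (auto simp: Legendre_def)
  ultimately show ?thesis
    using dvd_imp_le_int[of ?d "int p"] by fastforce
qed

lemma Legendre_cong:
  assumes "[a = b] (mod p)"
  shows "Legendre a p = Legendre b p"
proof -
  have "[y^2 = a] (mod p) \<longleftrightarrow> [y^2 = b] (mod p)" for y
    using assms cong_sym cong_trans by metis
  moreover have "[a = 0] (mod p) \<longleftrightarrow> [b = 0] (mod p)"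
    using assms cong_sym cong_trans by metis
  ultimately show ?thesis
    unfolding Legendre_def QuadRes_def by simp
qed

lemma Legendre_eq_minus_one: "\<not> QuadRes p a \<Longrightarrow> Legendre a p = -1"
  unfolding Legendre_def QuadRes_def by (metis cong_sym zero_power2)

lemma QuadRes_of_Legendre_eq_one: "Legendre a p = 1 \<Longrightarrow> QuadRes p a"
  unfolding Legendre_def by (auto split: if_splits)

lemma Legendre_unit_cases:
  assumes "prime p" "\<not> p dvd a"
  shows "Legendre a p = 1 \<or> Legendre a p = -1"
  using assms unfolding Legendre_def by (auto simp: cong_0_iff)

lemma exists_not_QuadRes:
  assumes "prime p" "2 < p"
  shows "\<exists>a. \<not> QuadRes (int p) a"
proof (rule ccontr)
  assume "\<nexists>a. \<not> QuadRes (int p) a"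
  then have all: "QuadRes (int p) a" for a
    by blast
  define f where "f x = x^2 mod int p" for x
  have "{1..int p - 1} \<subseteq> f ` {1..int p - 1}"
  proof
    fix a assume a: "a \<in> {1..int p - 1}"
    obtain y where "[y^2 = a] (mod int p)"
      using all[of a] unfolding QuadRes_def by blast
    then have fy: "f (y mod int p) = a"
      using a by (simp add: f_def cong_def power_mod)
    moreover have "y mod int p \<noteq> 0"
      using fy a by (auto simp: f_def)
    moreover have "0 \<le> y mod int p" "y mod int p < int p"
      using assms(2) by simp_all
    ultimately show "a \<in> f ` {1..int p - 1}"
      by (intro image_eqI[of _ _ "y mod int p"]) auto
  qed
  then have "inj_on f {1..int p - 1}"
    by (intro finite_surj_inj) auto
  moreover have "(int p - 1)^2 = int p * (int p - 2) + 1"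
    by (simp add: power2_eq_square algebra_simps)
  then have "f (int p - 1) = f 1"
    using assms(2) by (simp add: f_def)
  ultimately show False
    using assms(2) by (auto dest: inj_onD)
qed

text \<open>The first step from a residue \<open>k\<close> to a non-residue \<open>k + 1\<close> along \<open>0, 1, 2, \<dots>\<close>
  yields \<open>s\<close> with \<open>s^2 \<equiv> k\<close>.\<close>

lemma exists_Legendre_square_plus_one:
  assumes "prime p" "2 < p"
  shows "\<exists>s. \<not> int p dvd s \<and> Legendre (s^2 + 1) (int p) = -1"
proof -
  have "\<exists>k::nat. QuadRes (int p) (int k) \<and> \<not> QuadRes (int p) (int k + 1)"
  proof (rule ccontr)
    assume "\<not> ?thesis"
    then have "QuadRes (int p) (int k)" for k
      by (induction k) (auto simp: QuadRes_def add.commute intro: exI[of _ 0])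
    moreover obtain a where "\<not> QuadRes (int p) a"
      using exists_not_QuadRes[OF assms] by blast
    moreover have "[int (nat (a mod int p)) = a] (mod int p)"
      using assms(2) by (simp add: cong_def)
    ultimately show False
      unfolding QuadRes_def by (meson cong_trans)
  qed
  then obtain k :: nat where k: "QuadRes (int p) (int k)" "\<not> QuadRes (int p) (int k + 1)"
    by blast
  then obtain s where s: "[s^2 = int k] (mod int p)"
    unfolding QuadRes_def by blast
  have "\<not> int p dvd s"
  proof
    assume "int p dvd s"
    then have "[int k + 1 = 1^2] (mod int p)"
      using s by (metis cong_add_rcancel_0 cong_0_iff cong_sym cong_trans dvd_mult2 power2_eq_square
          power_one)
    then show False
      using k(2) unfolding QuadRes_def by (blast intro: cong_sym)
  qed
  moreover have "Legendre (s^2 + 1) (int p) = Legendre (int k + 1) (int p)"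
    using s by (intro Legendre_cong cong_add cong_refl)
  ultimately show ?thesis
    using Legendre_eq_minus_one[OF k(2)] by auto
qed

section \<open>Zero sums modulo a prime with unit-square weights\<close>

definition unit_squares :: "nat \<Rightarrow> int set" where
  "unit_squares p = {v^2 | v. \<not> int p dvd v}"

lemma square_in_unit_squares: "\<not> int p dvd v \<Longrightarrow> v^2 \<in> unit_squares p"
  unfolding unit_squares_def by blast

lemma weighted_zero_sum_unit_squares_single:
  assumes "prime p" "int p dvd y"
  shows "weighted_zero_sum p (unit_squares p) [y]"
proof -
  have "\<not> int p dvd 1"
    using prime_gt_1_nat[OF assms(1)] by auto
  then show ?thesis
    using assms(2) square_in_unit_squares[of p 1] by (auto simp: weighted_zero_sum_singleton_iff)
qed

lemma weighted_zero_sum_unit_squares_pair: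
  assumes "prime p" "\<not> int p dvd y1" "\<not> int p dvd y2" "Legendre (-(y1 * y2)) (int p) = 1"
  shows "weighted_zero_sum p (unit_squares p) [y1, y2]"
proof -
  obtain u where "[u^2 = -(y1 * y2)] (mod int p)"
    using QuadRes_of_Legendre_eq_one[OF assms(4)] unfolding QuadRes_def by blast
  then have u: "int p dvd u^2 + y1 * y2"
    by (simp add: cong_iff_dvd_diff)
  have "\<not> int p dvd u"
  proof
    assume "int p dvd u"
    then have "int p dvd y1 * y2"
      using u by (metis dvd_add_right_iff dvd_mult2 power2_eq_square)
    with assms(1-3) show False
      by (simp add: prime_dvd_mult_iff)
  qed
  moreover have "int p dvd u^2 * y1 + y1^2 * y2"
    using u by (metis (no_types) dvd_mult2 mult.commute power2_eq_square distrib_left mult.assoc)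
  ultimately show ?thesis
    using assms(2) square_in_unit_squares by (auto simp: weighted_zero_sum_pair_iff)
qed

lemma dvd_ternary_form_witness:
  fixes m s t h y1 y2 y3 :: int
  assumes t: "[t^2 = y1 * y3] (mod m)" and h: "[h^2 = (s^2 + 1) * -(y1 * y2)] (mod m)"
  shows "m dvd (s * h * t)^2 * y1 + ((s^2 + 1) * y1 * t)^2 * y2 + (h * y1)^2 * y3"
proof -
  let ?B = "s^2 + 1"
  let ?X = "s^2 * h^2 * y1 + ?B^2 * y1^2 * y2"
  have h0: "[h^2 + ?B * (y1 * y2) = 0] (mod m)"
    using cong_add[OF h cong_refl[of "?B * (y1 * y2)"]] by simp
  have "(s * h * t)^2 * y1 + (?B * y1 * t)^2 * y2 + (h * y1)^2 * y3 = t^2 * ?X + h^2 * y1^2 * y3"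
    by (simp only: power_mult_distrib) (simp add: algebra_simps)
  also have "[t^2 * ?X + h^2 * y1^2 * y3 = y1 * y3 * ?X + h^2 * y1^2 * y3] (mod m)"
    using t by (intro cong_add cong_mult cong_refl)
  also have "y1 * y3 * ?X + h^2 * y1^2 * y3 = y1^2 * y3 * ?B * (h^2 + ?B * (y1 * y2))"
    by (simp add: power2_eq_square algebra_simps)
  also have "[y1^2 * y3 * ?B * (h^2 + ?B * (y1 * y2)) = y1^2 * y3 * ?B * 0] (mod m)"
    using h0 by (intro cong_mult cong_refl)
  finally show ?thesis
    by (simp add: cong_0_iff)
qed

lemma weighted_zero_sum_unit_squares_triple:
  assumes "prime p" "2 < p" "\<not> int p dvd y1" "\<not> int p dvd y2" "\<not> int p dvd y3"
    and "Legendre (-(y1 * y2)) (int p) = -1" "Legendre (-(y2 * y3)) (int p) = -1"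
  shows "weighted_zero_sum p (unit_squares p) [y1, y2, y3]"
proof -
  let ?P = "int p"
  have prime_P: "prime ?P"
    using assms(1) by simp
  have "-(y1 * y2) * -(y2 * y3) = (y1 * y3) * (y2 * y2)"
    by simp
  then have "Legendre (-(y1 * y2)) ?P * Legendre (-(y2 * y3)) ?P
      = Legendre (y1 * y3) ?P * (Legendre y2 ?P * Legendre y2 ?P)"
    by (simp only: Legendre_mult[OF assms(1,2), symmetric])
  moreover have "Legendre y2 ?P * Legendre y2 ?P = 1"
    using Legendre_unit_cases[OF prime_P assms(4)] by auto
  ultimately have "Legendre (y1 * y3) ?P = 1"
    using assms(6,7) by simp
  then obtain t where t: "[t^2 = y1 * y3] (mod ?P)"
    using QuadRes_of_Legendre_eq_one unfolding QuadRes_def by blast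
  obtain s where s: "\<not> ?P dvd s" "Legendre (s^2 + 1) ?P = -1"
    using exists_Legendre_square_plus_one[OF assms(1,2)] by blast
  have "Legendre ((s^2 + 1) * -(y1 * y2)) ?P = 1"
    by (simp only: Legendre_mult[OF assms(1,2)] s(2) assms(6))
  then obtain h where h: "[h^2 = (s^2 + 1) * -(y1 * y2)] (mod ?P)"
    using QuadRes_of_Legendre_eq_one unfolding QuadRes_def by blast
  have not_dvd_B: "\<not> ?P dvd s^2 + 1"
    using s(2) by (auto simp: Legendre_def cong_0_iff)
  have "\<not> ?P dvd t"
    using t assms(3,5) prime_P
    by (metis cong_dvd_iff dvd_mult2 power2_eq_square prime_dvd_mult_iff)
  moreover have "\<not> ?P dvd h"
    using h not_dvd_B assms(3,4) prime_P
    by (metis cong_dvd_iff dvd_minus_iff dvd_mult2 power2_eq_square prime_dvd_mult_iff)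
  ultimately have "\<not> ?P dvd s * h * t" "\<not> ?P dvd (s^2 + 1) * y1 * t" "\<not> ?P dvd h * y1"
    using s(1) not_dvd_B assms(3) prime_P by (simp_all add: prime_dvd_mult_iff)
  with dvd_ternary_form_witness[OF t h] show ?thesis
    by (intro weighted_zero_sum_tripleI) (auto intro: square_in_unit_squares)
qed

lemma has_wzs_consec_unit_squares:
  assumes "prime p" "2 < p"
  shows "has_wzs_consec p (unit_squares p) [y1, y2, y3]"
proof -
  let ?U = "unit_squares p"
  have "weighted_zero_sum p ?U [y1] \<or> weighted_zero_sum p ?U [y2] \<or> weighted_zero_sum p ?U [y3] \<or>
      weighted_zero_sum p ?U [y1, y2] \<or> weighted_zero_sum p ?U [y2, y3] \<or>
      weighted_zero_sum p ?U [y1, y2, y3]"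
  proof (cases "int p dvd y1 \<or> int p dvd y2 \<or> int p dvd y3")
    case True
    then show ?thesis
      using weighted_zero_sum_unit_squares_single[OF assms(1)] by blast
  next
    case False
    then have units: "\<not> int p dvd y1" "\<not> int p dvd y2" "\<not> int p dvd y3"
      by simp_all
    have prime_P: "prime (int p)"
      using assms(1) by simp
    have "\<not> int p dvd -(y1 * y2)" "\<not> int p dvd -(y2 * y3)"
      using units prime_P by (simp_all add: prime_dvd_mult_iff)
    then consider "Legendre (-(y1 * y2)) (int p) = 1" | "Legendre (-(y2 * y3)) (int p) = 1"
      | "Legendre (-(y1 * y2)) (int p) = -1" "Legendre (-(y2 * y3)) (int p) = -1"
      using Legendre_unit_cases[OF prime_P] by blast
    then show ?thesis
    proof cases
      case 1
      then show ?thesis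
        using weighted_zero_sum_unit_squares_pair[OF assms(1) units(1,2)] by blast
    next
      case 2
      then show ?thesis
        using weighted_zero_sum_unit_squares_pair[OF assms(1) units(2,3)] by blast
    next
      case 3
      then show ?thesis
        using weighted_zero_sum_unit_squares_triple[OF assms units] by blast
    qed
  qed
  then show ?thesis
    by (elim disjE) (erule has_wzs_consecI[rotated], simp add: sublist_Cons_right)+
qed

section \<open>Lifting zero sums from \<open>p\<close> to \<open>n\<close>\<close>

lemma weighted_zero_sum_transfer:
  assumes "weighted_zero_sum m A ys"
    and weights: "\<And>a. a \<in> A \<Longrightarrow> f a \<in> B \<and> [f a = c * a] (mod int n)"
    and dvd: "\<And>S. int m dvd S \<Longrightarrow> int n dvd c * S"
  shows "weighted_zero_sum n B ys"
proof -
  obtain as where as: "ys \<noteq> []" "length as = length ys" "set as \<subseteq> A"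
    "int m dvd sum_list (map2 (*) as ys)"
    using assms(1) unfolding weighted_zero_sum_iff by blast
  have scaled: "[sum_list (map2 (*) (map f bs) zs) = c * sum_list (map2 (*) bs zs)] (mod int n)"
    if "set bs \<subseteq> A" for bs zs
    using that
  proof (induction bs zs rule: list_induct2')
    case (4 b bs z zs)
    then have "[f b * z + sum_list (map2 (*) (map f bs) zs)
        = c * b * z + c * sum_list (map2 (*) bs zs)] (mod int n)"
      using weights[of b] by (intro cong_add cong_mult cong_refl) auto
    then show ?case
      by (simp add: algebra_simps)
  qed simp_all
  have "int n dvd sum_list (map2 (*) (map f as) ys)"
    using cong_dvd_iff[OF scaled[OF as(3)]] dvd[OF as(4)] by simp
  moreover have "set (map f as) \<subseteq> B"
    using as(3) weights by auto
  ultimately show ?thesis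
    unfolding weighted_zero_sum_iff using as(1,2) by (intro conjI exI[of _ "map f as"]) simp_all
qed

lemma has_wzs_consec_transfer:
  assumes "has_wzs_consec m A ys"
    and "\<And>a. a \<in> A \<Longrightarrow> f a \<in> B \<and> [f a = c * a] (mod int n)"
    and "\<And>S. int m dvd S \<Longrightarrow> int n dvd c * S"
  shows "has_wzs_consec n B ys"
  using assms weighted_zero_sum_transfer unfolding has_wzs_consec_def by meson

lemma square_mod_in_sq_set_star:
  assumes "n > 0" "\<not> int n dvd x^2"
  shows "x^2 mod int n \<in> sq_set_star n"
proof -
  have "(x mod int n)^2 mod int n \<in> sq_set n"
    unfolding sq_set_def using assms(1) by (intro CollectI exI[of _ "x mod int n"]) simp
  then show ?thesis
    using assms(2) by (simp add: sq_set_star_def power_mod dvd_eq_mod_eq_0)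
qed

text \<open>Multiplying the weights by \<open>(r p^k)^2\<close> turns a zero sum modulo \<open>p\<close> into one modulo
  \<open>n\<close>, and a weight \<open>v^2\<close> with \<open>p \<nmid> v\<close> stays nonzero modulo \<open>n\<close> because the exponent
  of \<open>p\<close> in \<open>(r p^k v)^2\<close> is even.\<close>

lemma has_wzs_consec_lift_unit_squares:
  assumes n: "n = p^(2*k+1) * r" and p: "prime p" and r: "\<not> p dvd r"
    and "has_wzs_consec p (unit_squares p) ys"
  shows "has_wzs_consec n (sq_set_star n) ys"
proof -
  define Q where "Q = int r * int p ^ k"
  have n_split: "int n = int p ^ (2 * k) * (int r * int p)"
    unfolding n by (simp add: power_add algebra_simps)
  have "r \<noteq> 0"
    using r by (metis dvd_0_right)
  then have "n > 0"
    using n p prime_gt_0_nat by simp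
  show ?thesis
  proof (rule has_wzs_consec_transfer[OF assms(4), where f = "\<lambda>a. (Q^2 * a) mod int n"])
    fix a assume "a \<in> unit_squares p"
    then obtain v where a: "a = v^2" and v: "\<not> int p dvd v"
      unfolding unit_squares_def by blast
    have "(Q * v)^2 = int p ^ (2 * k) * (int r * (int r * v^2))"
      unfolding Q_def by (simp add: power_mult_distrib power_mult power2_eq_square algebra_simps)
    moreover have "\<not> int p dvd int r * v^2"
      using p r v by (simp add: prime_dvd_mult_iff prime_dvd_power_iff)
    ultimately have "\<not> int n dvd (Q * v)^2"
      unfolding n_split using \<open>r \<noteq> 0\<close> p by (simp add: prime_gt_0_nat)
    then show "(Q^2 * a) mod int n \<in> sq_set_star n \<and> [(Q^2 * a) mod int n = Q^2 * a] (mod int n)"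
      using square_mod_in_sq_set_star[OF \<open>n > 0\<close>, of "Q * v"] unfolding a
      by (simp add: power_mult_distrib cong_def)
  next
    fix S assume "int p dvd S"
    then obtain M where "S = int p * M" ..
    then have "Q^2 * S = int n * (int r * M)"
      unfolding n_split Q_def by (simp add: power_mult_distrib power_mult power2_eq_square algebra_simps)
    then show "int n dvd Q^2 * S"
      by simp
  qed
qed

lemma sq_set_star_elemE:
  assumes "w \<in> sq_set_star n"
  obtains x where "[w = x^2] (mod int n)" "\<not> int n dvd x^2"
  using assms unfolding sq_set_star_def sq_set_def by (auto simp: cong_def dvd_eq_mod_eq_0)

section \<open>An anisotropic binary form modulo \<open>n\<close>\<close>

text \<open>Every odd number is a square modulo \<open>2\<close>, so at the prime \<open>2\<close> non-squares are detected
  modulo \<open>4\<close>.\<close>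

definition qr_modulus :: "int \<Rightarrow> int" where
  "qr_modulus q = (if q = 2 then 4 else q)"

lemma qr_modulus_eq_power: "qr_modulus q = q ^ (if q = 2 then 2 else 1)"
  by (simp add: qr_modulus_def)

lemma not_QuadRes_4_3: "\<not> QuadRes 4 (3 :: int)"
proof
  assume "QuadRes 4 (3 :: int)"
  then obtain y :: int where "y^2 mod 4 = 3"
    unfolding QuadRes_def cong_def by auto
  moreover have "y^2 mod 4 = (y mod 4)^2 mod 4"
    by (simp add: power_mod)
  moreover have "y mod 4 \<in> {0, 1, 2, 3}"
    by auto
  ultimately show False
    by (auto simp: power2_eq_square)
qed

lemma exists_not_QuadRes_qr_modulus:
  assumes "prime q"
  shows "\<exists>a. \<not> QuadRes (qr_modulus q) a"
proof (cases "q = 2")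
  case True
  then show ?thesis
    using not_QuadRes_4_3 by (auto simp: qr_modulus_def)
next
  case False
  have "q = int (nat q)"
    using prime_ge_0_int[OF assms] by simp
  moreover have "prime (nat q)" "2 < nat q"
    using assms False prime_ge_2_int[OF assms] by (simp_all add: prime_nat_iff_prime)
  ultimately show ?thesis
    using exists_not_QuadRes[of "nat q"] False by (simp add: qr_modulus_def)
qed

lemma exists_common_not_QuadRes:
  fixes n :: nat
  assumes "n \<noteq> 0"
  shows "\<exists>c. \<forall>q. prime q \<and> q dvd int n \<longrightarrow> \<not> QuadRes (qr_modulus q) c"
proof -
  obtain a where a: "\<And>q. prime q \<Longrightarrow> \<not> QuadRes (qr_modulus q) (a q)"
    using exists_not_QuadRes_qr_modulus by metis
  define P where "P = {q :: nat. prime q \<and> q dvd n}"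
  define m where "m q = nat (qr_modulus (int q))" for q
  define u where "u q = nat (a (int q) mod qr_modulus (int q))" for q
  have "P \<subseteq> {..n}"
    using assms by (auto simp: P_def dest: dvd_imp_le)
  then have "finite P"
    by (rule finite_subset) simp
  moreover have "coprime (m i) (m j)" if "i \<in> P" "j \<in> P" "i \<noteq> j" for i j
  proof -
    have "m q = q ^ (if q = 2 then 2 else 1)" for q
      by (simp add: m_def qr_modulus_def power2_eq_square)
    moreover have "coprime i j"
      using that primes_coprime[of i j] by (simp add: P_def)
    ultimately show ?thesis
      by simp
  qed
  ultimately obtain x where x: "\<forall>q\<in>P. [x = u q] (mod m q)"
    using chinese_remainder_nat by blast
  have "\<not> QuadRes (qr_modulus q) (int x)" if q: "prime q" "q dvd int n" for q
  proof
    have q_nat: "q = int (nat q)"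
      using prime_ge_0_int[OF q(1)] by simp
    then have "nat q \<in> P"
      using q unfolding P_def by (simp flip: int_dvd_int_iff)
    have "qr_modulus q > 0"
      using prime_gt_0_int[OF q(1)] by (simp add: qr_modulus_def)
    then have "int (u (nat q)) = a q mod qr_modulus q" "int (m (nat q)) = qr_modulus q"
      using q_nat unfolding u_def m_def by simp_all
    moreover have "[int x = int (u (nat q))] (mod int (m (nat q)))"
      using x \<open>nat q \<in> P\<close> by (simp add: cong_int_iff)
    ultimately have "[int x = a q] (mod qr_modulus q)"
      by (simp add: cong_mod_right)
    moreover assume "QuadRes (qr_modulus q) (int x)"
    ultimately show False
      using a[OF q(1)] unfolding QuadRes_def by (meson cong_trans)
  qed
  then show ?thesis
    by blast
qed

lemma QuadRes_of_dvd_diff: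
  fixes m x z c :: int
  assumes "coprime z m" "m dvd x^2 - c * z^2"
  shows "QuadRes m c"
proof -
  obtain w where w: "[z * w = 1] (mod m)"
    using cong_solve_coprime_int[OF assms(1)] by blast
  have "[x^2 = c * z^2] (mod m)"
    using assms(2) by (simp add: cong_iff_dvd_diff)
  from cong_mult[OF this cong_refl[of "w^2"]]
  have "[(x * w)^2 = c * (z * w)^2] (mod m)"
    by (simp add: power_mult_distrib mult.assoc)
  also have "[c * (z * w)^2 = c * 1^2] (mod m)"
    using w by (intro cong_mult cong_refl cong_pow)
  finally have "[(x * w)^2 = c] (mod m)"
    by simp
  then show ?thesis
    unfolding QuadRes_def ..
qed

lemma qr_modulus_mult_power_dvd:
  fixes q N :: int
  assumes "prime q" "even (multiplicity 2 N)" "2 * j < multiplicity q N"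
  shows "qr_modulus q * q ^ (2 * j) dvd N"
proof -
  have "2 * j + (if q = 2 then 2 else 1) \<le> multiplicity q N"
  proof (cases "q = 2")
    case True
    then obtain e where "multiplicity q N = 2 * e"
      using assms(2) by (auto elim: evenE)
    then show ?thesis
      using True assms(3) by simp
  qed (use assms(3) in simp)
  then have "q ^ (2 * j + (if q = 2 then 2 else 1)) dvd N"
    by (rule multiplicity_dvd')
  then show ?thesis
    by (simp add: qr_modulus_eq_power power_add mult.commute)
qed

lemma power_dvd_of_power_dvd_square:
  fixes q x :: "'a :: factorial_semiring"
  assumes "prime q" "q ^ (2 * j) dvd x^2"
  shows "q ^ j dvd x"
proof (cases "x = 0")
  case False
  have "2 * j \<le> multiplicity q (x^2)"
    using power_dvd_iff_le_multiplicity[of "x^2" q "2 * j"] assms False by (simp add: not_prime_unit)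
  also have "multiplicity q (x^2) = 2 * multiplicity q x"
    using assms(1) False by (intro prime_elem_multiplicity_power_distrib) auto
  finally show ?thesis
    by (intro multiplicity_dvd') linarith
qed simp

lemma multiplicity_int_of_nat:
  assumes "prime p"
  shows "multiplicity (int p) (int n) = multiplicity p n"
proof (cases "n = 0")
  case False
  have "\<not> p ^ Suc (multiplicity p n) dvd n"
    using power_dvd_iff_le_multiplicity[of n p "Suc (multiplicity p n)"] False assms not_prime_unit
    by auto
  then have "\<not> int p ^ Suc (multiplicity p n) dvd int n"
    by (metis int_dvd_int_iff of_nat_power)
  moreover have "int p ^ multiplicity p n dvd int n"
    by (metis int_dvd_int_iff of_nat_power multiplicity_dvd)
  ultimately show ?thesis
    by (intro multiplicity_eqI)
qed simp

lemma dvd_binary_form_cancel_square: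
  fixes M q x z c :: int
  assumes "prime q" "M * q ^ (2 * j) dvd x^2 - c * (q ^ j * z)^2"
  shows "\<exists>y. M dvd y^2 - c * z^2"
proof -
  have square_power: "(q ^ j)^2 = q ^ (2 * j)"
    by (simp add: power_mult[symmetric] mult.commute)
  have "q ^ (2 * j) dvd (x^2 - c * (q ^ j * z)^2) + c * (q ^ j * z)^2"
  proof (rule dvd_add)
    show "q ^ (2 * j) dvd x^2 - c * (q ^ j * z)^2"
      using assms(2) by (rule dvd_mult_right)
    show "q ^ (2 * j) dvd c * (q ^ j * z)^2"
      unfolding power_mult_distrib square_power by simp
  qed
  then have "q ^ j dvd x"
    using power_dvd_of_power_dvd_square[OF assms(1)] by simp
  then obtain y where y: "x = q ^ j * y"
    by (elim dvdE)
  have "x^2 - c * (q ^ j * z)^2 = q ^ (2 * j) * (y^2 - c * z^2)"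
    unfolding y power_mult_distrib square_power by (simp add: algebra_simps)
  then have "q ^ (2 * j) * M dvd q ^ (2 * j) * (y^2 - c * z^2)"
    using assms(2) by (simp add: mult.commute)
  then have "M dvd y^2 - c * z^2"
    using assms(1) by (simp add: prime_gt_0_int)
  then show ?thesis ..
qed

text \<open>Compare \<open>q\<close>-adic valuations at a prime \<open>q\<close> where \<open>N\<close> does not divide \<open>z^2\<close>: after
  cancelling \<open>q^(2 v\<^sub>q(z))\<close> the congruence exhibits \<open>c\<close> as a square modulo \<open>qr_modulus q\<close>.\<close>

lemma dvd_square_of_dvd_binary_form:
  fixes N c x z :: int
  assumes "N \<noteq> 0" "even (multiplicity 2 N)"
    and non_res: "\<And>q. prime q \<Longrightarrow> q dvd N \<Longrightarrow> \<not> QuadRes (qr_modulus q) c"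
    and form: "N dvd x^2 - c * z^2"
  shows "N dvd z^2"
proof (rule ccontr)
  assume not_dvd: "\<not> N dvd z^2"
  then have "z \<noteq> 0"
    by auto
  have "\<not> (\<forall>q. prime q \<longrightarrow> multiplicity q N \<le> multiplicity q (z^2))"
    using multiplicity_le_imp_dvd[OF assms(1)] not_dvd by blast
  then obtain q where q: "prime q" "multiplicity q (z^2) < multiplicity q N"
    by (auto simp: not_le)
  define j where "j = multiplicity q z"
  have "multiplicity q (z^2) = 2 * j"
    unfolding j_def using q(1) \<open>z \<noteq> 0\<close> by (intro prime_elem_multiplicity_power_distrib) auto
  then have M: "qr_modulus q * q ^ (2 * j) dvd N"
    using qr_modulus_mult_power_dvd[OF q(1) assms(2)] q(2) by simp
  have "\<not> is_unit q"
    using q(1) not_prime_unit by blast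
  then obtain z' where z': "z = q ^ j * z'" "\<not> q dvd z'"
    unfolding j_def using multiplicity_decompose'[OF \<open>z \<noteq> 0\<close>] by blast
  have "qr_modulus q * q ^ (2 * j) dvd x^2 - c * (q ^ j * z')^2"
    using dvd_trans[OF M form] unfolding z'(1) .
  then obtain y where "qr_modulus q dvd y^2 - c * z'^2"
    using dvd_binary_form_cancel_square[OF q(1)] by blast
  moreover have "coprime z' (qr_modulus q)"
    using prime_imp_coprime[OF q(1) z'(2)] by (simp add: qr_modulus_eq_power coprime_commute)
  moreover have "q dvd N"
    using dvd_mult_left[OF M] by (auto simp: qr_modulus_eq_power intro: dvd_trans[rotated])
  ultimately show False
    using non_res[OF q(1)] QuadRes_of_dvd_diff by blast
qed

lemma not_has_wzs_subseq_one_neg: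
  assumes anisotropic: "\<And>x z. int n dvd x^2 - c * z^2 \<Longrightarrow> int n dvd z^2"
  shows "\<not> has_wzs_subseq n (sq_set_star n) [1, -c mod int n]"
proof
  let ?A = "sq_set_star n" and ?b = "-c mod int n"
  have b: "[?b = -c] (mod int n)"
    by (simp add: cong_def)
  have "\<not> weighted_zero_sum n ?A [1]"
  proof
    assume "weighted_zero_sum n ?A [1]"
    then obtain w where "w \<in> ?A" "int n dvd w"
      by (auto simp: weighted_zero_sum_singleton_iff)
    then show False
      by (metis sq_set_star_elemE cong_dvd_iff)
  qed
  moreover have "\<not> weighted_zero_sum n ?A [?b]"
  proof
    assume "weighted_zero_sum n ?A [?b]"
    then obtain w where w: "w \<in> ?A" "int n dvd w * ?b"
      by (auto simp: weighted_zero_sum_singleton_iff)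
    obtain x where x: "[w = x^2] (mod int n)" "\<not> int n dvd x^2"
      using w(1) by (rule sq_set_star_elemE)
    have "[w * ?b = 0^2 - c * x^2] (mod int n)"
      using cong_mult[OF x(1) b] by (simp add: mult.commute)
    then show False
      using w(2) x(2) anisotropic[of 0 x] by (simp add: cong_dvd_iff)
  qed
  moreover have "\<not> weighted_zero_sum n ?A [1, ?b]"
  proof
    assume "weighted_zero_sum n ?A [1, ?b]"
    then obtain v w where vw: "v \<in> ?A" "w \<in> ?A" "int n dvd v * 1 + w * ?b"
      by (auto simp: weighted_zero_sum_pair_iff)
    obtain x where x: "[v = x^2] (mod int n)"
      using vw(1) by (rule sq_set_star_elemE)
    obtain z where z: "[w = z^2] (mod int n)" "\<not> int n dvd z^2"
      using vw(2) by (rule sq_set_star_elemE)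
    have "[v * 1 + w * ?b = x^2 - c * z^2] (mod int n)"
      using cong_add[OF x(1) cong_mult[OF z(1) b]] by (simp add: mult.commute)
    then show False
      using vw(3) z(2) anisotropic by (simp add: cong_dvd_iff)
  qed
  moreover assume "has_wzs_subseq n ?A [1, ?b]"
  ultimately show False
    unfolding has_wzs_subseq_def subseq_two_iff by blast
qed

lemma D_const_C_const_eq_3:
  assumes upper: "\<And>ys. length ys = 3 \<Longrightarrow> has_wzs_consec n A ys"
    and range: "set [a, b] \<subseteq> {0..<int n}" and lower: "\<not> has_wzs_subseq n A [a, b]"
  shows "D_const A n = 3 \<and> C_const A n = 3"
proof -
  have "\<not> has_wzs_subseq n A [a]"
    using lower has_wzs_subseq_mono[of "[a]" "[a, b]"] by auto
  then have short: "\<exists>ys. length ys = t \<and> set ys \<subseteq> {0..<int n} \<and> \<not> has_wzs_subseq n A ys"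
    if "0 < t" "t < 3" for t
  proof -
    have "t = length [a] \<or> t = length [a, b]"
      using that by auto
    moreover have "set [a] \<subseteq> {0..<int n}"
      using range by simp
    ultimately show ?thesis
      using range lower \<open>\<not> has_wzs_subseq n A [a]\<close> by blast
  qed
  have "D_const A n = 3"
    unfolding D_const_def
  proof (rule Least_equality)
    show "0 < (3::nat) \<and> (\<forall>ys. length ys = 3 \<and> set ys \<subseteq> {0..<int n} \<longrightarrow> has_wzs_subseq n A ys)"
      using upper has_wzs_consec_imp_subseq by auto
  next
    fix t assume "0 < t \<and> (\<forall>ys. length ys = t \<and> set ys \<subseteq> {0..<int n} \<longrightarrow> has_wzs_subseq n A ys)"
    then show "3 \<le> t"
      using short by (meson not_le)
  qed
  moreover have "C_const A n = 3"
    unfolding C_const_def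
  proof (rule Least_equality)
    show "0 < (3::nat) \<and> (\<forall>ys. length ys = 3 \<and> set ys \<subseteq> {0..<int n} \<longrightarrow> has_wzs_consec n A ys)"
      using upper by auto
  next
    fix t assume "0 < t \<and> (\<forall>ys. length ys = t \<and> set ys \<subseteq> {0..<int n} \<longrightarrow> has_wzs_consec n A ys)"
    then show "3 \<le> t"
      using short has_wzs_consec_imp_subseq by (meson not_le)
  qed
  ultimately show ?thesis ..
qed

lemma exists_prime_odd_multiplicity:
  fixes n :: nat
  assumes "\<nexists>k. n = k^2"
  shows "\<exists>p. prime p \<and> odd (multiplicity p n)"
  using assms is_nth_power_conv_multiplicity_nat[of 2 n] unfolding is_nth_power_def by auto

lemma has_wzs_consec_length_3:
  assumes "prime p" "2 < p" "odd (multiplicity p n)" "length ys = 3"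
  shows "has_wzs_consec n (sq_set_star n) ys"
proof -
  obtain k where k: "multiplicity p n = 2 * k + 1"
    using assms(3) by (rule oddE)
  then have "n \<noteq> 0"
    by (metis add_is_0 multiplicity_zero zero_neq_one)
  define r where "r = n div p ^ (2 * k + 1)"
  have "n = p ^ (2 * k + 1) * r"
    unfolding r_def using multiplicity_dvd[of p n] k by simp
  moreover have "\<not> p dvd r"
    unfolding r_def using multiplicity_decompose[OF \<open>n \<noteq> 0\<close>, of p] prime_gt_1_nat[OF assms(1)] k
    by simp
  moreover obtain y1 y2 y3 where "ys = [y1, y2, y3]"
    using assms(4) by (auto simp: numeral_3_eq_3 length_Suc_conv)
  ultimately show ?thesis
    using has_wzs_consec_lift_unit_squares[OF _ assms(1)] has_wzs_consec_unit_squares[OF assms(1,2)]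
    by blast
qed

lemma exists_pair_without_wzs_subseq:
  assumes "2 \<le> n" "even (multiplicity (2::nat) n)"
  shows "\<exists>b. set [1, b] \<subseteq> {0..<int n} \<and> \<not> has_wzs_subseq n (sq_set_star n) [1, b]"
proof -
  obtain c where c: "\<forall>q. prime q \<and> q dvd int n \<longrightarrow> \<not> QuadRes (qr_modulus q) c"
    using exists_common_not_QuadRes assms(1) by fastforce
  have "even (multiplicity 2 (int n))"
    using assms(2) multiplicity_int_of_nat[of 2 n] by simp
  then have "int n dvd z^2" if "int n dvd x^2 - c * z^2" for x z
    using dvd_square_of_dvd_binary_form[of "int n"] c that assms(1) by auto
  then have "\<not> has_wzs_subseq n (sq_set_star n) [1, -c mod int n]"
    by (rule not_has_wzs_subseq_one_neg)
  moreover have "set [1, -c mod int n] \<subseteq> {0..<int n}"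
    using assms(1) by auto
  ultimately show ?thesis
    by blast
qed

theorem mainTheorem12:
  fixes n :: nat
  assumes "\<not> (\<exists>k::nat. n = k ^ 2)"
    and "even (multiplicity (2::nat) n)"
  shows "D_const (sq_set_star n) n = 3 \<and> C_const (sq_set_star n) n = 3"
proof -
  have "n \<noteq> 0" "n \<noteq> 1"
    using assms(1) by (metis power_zero_numeral, metis power_one)
  then have "2 \<le> n"
    by simp
  obtain p where p: "prime p" "odd (multiplicity p n)"
    using exists_prime_odd_multiplicity[OF assms(1)] by blast
  with assms(2) have "2 < p"
    using prime_ge_2_nat[of p] by (cases "p = 2") auto
  obtain b where "set [1, b] \<subseteq> {0..<int n}" "\<not> has_wzs_subseq n (sq_set_star n) [1, b]"
    using exists_pair_without_wzs_subseq[OF \<open>2 \<le> n\<close> assms(2)] by blast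
  then show ?thesis
    using D_const_C_const_eq_3 has_wzs_consec_length_3[OF p(1) \<open>2 < p\<close> p(2)] by blast
qed

end
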